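(* Let $\mathcal{C}\subset\mathbb{P}^2(\mathbb{C})$ be a curve of degree $n$. (i) If $\mathcal C$ has exactly one singular point, and this point is an ordinary singular point of multiplicity $\mu$ with $\mu=n-1$ or $\mu=n-2$, then $\mathcal C$ is irreducible. (ii) If $\mathcal C$ has exactly two singular points, and they are ordinary singular points of multiplicities $n-1$ and $2$ respectively, then $\mathcal C$ has a linear component.
   Context: An ordinary singular point of multiplicity $\mu$ is a point of multiplicity $\mu$ at which the curve has $\mu$ distinct tangent lines. *)

theory Defs
  imports "HOL-Analysis.Analysis" "HOL-Computational_Algebra.Polynomial"
begin

text \<open>Points of the projective plane are nonzero vectors
  in complex^3, up to nonzero scalar multiples.\<close>

definition eval3 :: "'a::comm_ring_1 poly poly poly \<Rightarrow> 'a \<Rightarrow> 'a \<Rightarrow> 'a \<Rightarrow> 'a" where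
  "eval3 F x y z = poly (poly (poly F [:[:z:]:]) [:y:]) x"

definition homogeneous3 :: "complex poly poly poly \<Rightarrow> nat \<Rightarrow> bool" where
  "homogeneous3 F d \<longleftrightarrow>
     (\<forall>i j k. coeff (coeff (coeff F i) j) k \<noteq> 0 \<longrightarrow> i + j + k = d)"

text \<open>The univariate polynomial t \<mapsto> F(p + t v).\<close>
definition restr_line :: "complex poly poly poly \<Rightarrow> complex^3 \<Rightarrow> complex^3 \<Rightarrow> complex poly" where
  "restr_line F p v =
     eval3 (map_poly (map_poly (map_poly (\<lambda>c. [:c:]))) F)
       [:p$1, v$1:] [:p$2, v$2:] [:p$3, v$3:]"

definition proj_eq :: "complex^3 \<Rightarrow> complex^3 \<Rightarrow> bool" where
  "proj_eq p q \<longleftrightarrow> (\<exists>c. c \<noteq> 0 \<and> q = c *s p)"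

text \<open>Multiplicity of the curve F = 0 at p: order of vanishing of F(p + t v) at t = 0
  for generic direction v.\<close>
definition point_multiplicity :: "complex poly poly poly \<Rightarrow> complex^3 \<Rightarrow> nat" where
  "point_multiplicity F p = (LEAST m. \<exists>v. coeff (restr_line F p v) m \<noteq> 0)"

definition singular_point :: "complex poly poly poly \<Rightarrow> complex^3 \<Rightarrow> bool" where
  "singular_point F p \<longleftrightarrow> p \<noteq> 0 \<and>
     (\<forall>v. coeff (restr_line F p v) 0 = 0 \<and> coeff (restr_line F p v) 1 = 0)"

text \<open>Tangent lines at p: lines through p (as 2-dimensional subspaces of C^3) on which
  the leading form of the expansion of F at p (the tangent cone) vanishes.\<close>
definition tangent_lines :: "complex poly poly poly \<Rightarrow> complex^3 \<Rightarrow> (complex^3) set set" where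
  "tangent_lines F p =
     { {w. \<exists>a b. w = a *s p + b *s v} | v.
         (\<forall>c. v \<noteq> c *s p) \<and> coeff (restr_line F p v) (point_multiplicity F p) = 0 }"

definition ordinary_singular_point :: "complex poly poly poly \<Rightarrow> complex^3 \<Rightarrow> nat \<Rightarrow> bool" where
  "ordinary_singular_point F p \<mu> \<longleftrightarrow>
     singular_point F p \<and> point_multiplicity F p = \<mu> \<and>
     finite (tangent_lines F p) \<and> card (tangent_lines F p) = \<mu>"

definition has_linear_component :: "complex poly poly poly \<Rightarrow> bool" where
  "has_linear_component F \<longleftrightarrow> (\<exists>L. L \<noteq> 0 \<and> homogeneous3 L 1 \<and> L dvd F)"

end

theory Submission
  imports Defs "HOL-Computational_Algebra.Fundamental_Theorem_Algebra"
begin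

(*
  Move the singular point p to e3 = (0:0:1) by a linear change of coordinates. Writing F as a
  polynomial in z whose coefficients are binary forms in x, y, the multiplicity of p is n minus
  the z-degree of F, and the tangent cone at p is the leading coefficient of F in z; p is ordinary
  iff this binary form of degree \<mu> has \<mu> distinct projective roots.

  (i) If \<mu> \<ge> n - 2, the z-degree of F is at most 2. For a factorisation F = G H into
  non-units, either one factor is free of z or both have z-degree 1; an elimination of z shows that
  then G and H have a common zero other than p (a second singular point) or their leading
  coefficients have a common root (a repeated tangent at p).

  (ii) Move the two singular points to e1 and e2. On the line z = 0 the form F vanishes to order
  n - 1 at e1 and to order 2 at e2, i.e. to total order n + 1 > n, so it vanishes identically
  there and z divides F.
*)

definition is_ring_hom :: "('a::comm_ring_1 \<Rightarrow> 'b::comm_ring_1) \<Rightarrow> bool" where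
  "is_ring_hom h \<longleftrightarrow>
     h 0 = 0 \<and> h 1 = 1 \<and> (\<forall>a b. h (a + b) = h a + h b) \<and> (\<forall>a b. h (a * b) = h a * h b)"

lemma is_ring_homD:
  assumes "is_ring_hom h"
  shows "h 0 = 0" "h 1 = 1" "h (a + b) = h a + h b" "h (a * b) = h a * h b"
  using assms by (auto simp: is_ring_hom_def)

lemma is_ring_hom_map_poly:
  assumes "is_ring_hom h"
  shows "is_ring_hom (map_poly h)"
proof -
  have add: "map_poly h (p + q) = map_poly h p + map_poly h q" for p q
    by (intro poly_eqI) (simp add: coeff_map_poly is_ring_homD[OF assms])
  have "map_poly h (p * q) = map_poly h p * map_poly h q" for p q
  proof (induction p)
    case (pCons a p)
    have "map_poly h (pCons a p * q) = map_poly h (smult a q + pCons 0 (p * q))" by simp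
    also have "\<dots> = smult (h a) (map_poly h q) + pCons 0 (map_poly h p * map_poly h q)"
      by (simp add: add map_poly_smult is_ring_homD[OF assms] map_poly_pCons pCons.IH)
    also have "\<dots> = map_poly h (pCons a p) * map_poly h q"
      by (simp add: map_poly_pCons is_ring_homD[OF assms])
    finally show ?case .
  qed simp
  with add show ?thesis
    by (auto simp: is_ring_hom_def is_ring_homD[OF assms] one_pCons map_poly_pCons)
qed

lemma ring_hom_unit:
  assumes "is_ring_hom h" "a dvd 1"
  shows "h a dvd 1"
  using assms by (metis dvdE dvdI is_ring_homD(2,4))

lemma irreducible_if_irreducible_ring_hom_image:
  assumes "is_ring_hom f" "is_ring_hom g" "\<And>x. g (f x) = x" "irreducible (f x)"
  shows "irreducible x"
  unfolding irreducible_def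
proof (intro conjI allI impI)
  show "x \<noteq> 0" using assms(1,4) by (auto simp: is_ring_homD)
  show "\<not> x dvd 1" using ring_hom_unit[OF assms(1)] assms(4) by (auto simp: irreducible_def)
  fix a b assume "x = a * b"
  then have "f a dvd 1 \<or> f b dvd 1"
    using assms(4) is_ring_homD(4)[OF assms(1)] by (auto simp: irreducible_def)
  then show "a dvd 1 \<or> b dvd 1" using ring_hom_unit[OF assms(2)] assms(3) by metis
qed

lemma is_ring_hom_comp: "is_ring_hom f \<Longrightarrow> is_ring_hom g \<Longrightarrow> is_ring_hom (f \<circ> g)"
  by (auto simp: is_ring_hom_def)

lemma map_poly_ident [simp]: "map_poly (\<lambda>x. x) = (\<lambda>x. x)"
  by (rule ext) simp

lemma is_ring_hom_poly_eval: "is_ring_hom (\<lambda>p. poly p x)"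
  by (auto simp: is_ring_hom_def)

lemma is_ring_hom_pcompose: "is_ring_hom (\<lambda>p. pcompose p q)"
  by (auto simp: is_ring_hom_def pcompose_add pcompose_mult pcompose_1)

lemma ring_hom_poly:
  assumes "is_ring_hom h"
  shows "h (poly p x) = poly (map_poly h p) (h x)"
  by (induction p) (auto simp: is_ring_homD[OF assms] map_poly_pCons)

lemma ring_hom_eval3:
  assumes "is_ring_hom h"
  shows "h (eval3 F x y z) = eval3 (map_poly (map_poly (map_poly h)) F) (h x) (h y) (h z)"
proof -
  have h1: "is_ring_hom (map_poly h)" and h2: "is_ring_hom (map_poly (map_poly h))"
    using assms by (simp_all add: is_ring_hom_map_poly)
  show ?thesis unfolding eval3_def
    by (simp add: ring_hom_poly[OF assms] ring_hom_poly[OF h1] ring_hom_poly[OF h2]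
        map_poly_pCons is_ring_homD[OF assms] is_ring_homD[OF h1])
qed

lemma is_ring_hom_eval3: "is_ring_hom (\<lambda>F. eval3 F x y z)"
  by (auto simp: is_ring_hom_def eval3_def)

definition eval2 :: "complex poly poly \<Rightarrow> complex \<Rightarrow> complex \<Rightarrow> complex" where
  "eval2 C x y = poly (poly C [:y:]) x"

definition eval_vec :: "complex poly poly poly \<Rightarrow> complex^3 \<Rightarrow> complex" where
  "eval_vec F w = eval3 F (w$1) (w$2) (w$3)"

lemma is_ring_hom_eval2: "is_ring_hom (\<lambda>C. eval2 C x y)"
  by (auto simp: is_ring_hom_def eval2_def)

lemma is_ring_hom_eval_vec: "is_ring_hom (\<lambda>F. eval_vec F w)"
  unfolding eval_vec_def by (rule is_ring_hom_eval3)

lemma eval2_simps [simp]: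
  "eval2 (P + Q) x y = eval2 P x y + eval2 Q x y" "eval2 (P * Q) x y = eval2 P x y * eval2 Q x y"
  "eval2 (P - Q) x y = eval2 P x y - eval2 Q x y" "eval2 0 x y = 0" "eval2 [:[:c:]:] x y = c"
  by (auto simp: eval2_def)

lemma eval_vec_simps [simp]:
  "eval_vec (P + Q) w = eval_vec P w + eval_vec Q w" "eval_vec (P * Q) w = eval_vec P w * eval_vec Q w"
  "eval_vec (P - Q) w = eval_vec P w - eval_vec Q w" "eval_vec 0 w = 0" "eval_vec 1 w = 1"
  "eval_vec [:[:[:c:]:]:] w = c" "eval_vec (smult [:[:c:]:] P) w = c * eval_vec P w"
  by (auto simp: eval_vec_def eval3_def)

lemma eval2_eq_poly_map_poly: "eval2 C x y = poly (map_poly (\<lambda>c. poly c x) C) y"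
  unfolding eval2_def using ring_hom_poly[OF is_ring_hom_poly_eval, of C "[:y:]" x] by simp

lemma eval_vec_eq_poly_map_poly: "eval_vec F w = poly (map_poly (\<lambda>C. eval2 C (w$1) (w$2)) F) (w$3)"
proof -
  have "eval_vec F w = eval2 (poly F [:[:w$3:]:]) (w$1) (w$2)" by (simp add: eval_vec_def eval3_def eval2_def)
  also have "\<dots> = poly (map_poly (\<lambda>C. eval2 C (w$1) (w$2)) F) (w$3)"
    using ring_hom_poly[OF is_ring_hom_eval2, of F "[:[:w$3:]:]"] by simp
  finally show ?thesis .
qed

lemma poly_eq_zero_if_vanishes_on_inj:
  fixes P :: "'a::idom poly" and f :: "complex \<Rightarrow> 'a"
  assumes "\<And>z. poly P (f z) = 0" "inj f"
  shows "P = 0"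
proof (rule ccontr)
  assume "P \<noteq> 0"
  then have "finite {x. poly P x = 0}" by (rule poly_roots_finite)
  moreover have "range f \<subseteq> {x. poly P x = 0}" using assms by auto
  ultimately have "finite (UNIV :: complex set)"
    using assms(2) finite_imageD finite_subset by metis
  then show False using infinite_UNIV_char_0 by blast
qed

lemma eval2_eq_zeroI:
  assumes "\<And>x y. eval2 C x y = 0"
  shows "C = 0"
proof -
  have "poly C [:y:] = 0" for y
    using assms poly_eq_poly_eq_iff[of "poly C [:y:]" 0] by (auto simp: eval2_def)
  then show ?thesis by (intro poly_eq_zero_if_vanishes_on_inj[where f="\<lambda>y. [:y:]"]) (auto simp: inj_def)
qed

lemma eval_vec_eq_zeroI:
  assumes "\<And>w. eval_vec F w = 0"
  shows "F = 0"
proof -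
  have "poly F [:[:z:]:] = 0" for z
    by (intro eval2_eq_zeroI) (use assms[of "vector [_, _, z]"] in \<open>simp add: eval2_def eval_vec_def eval3_def\<close>)
  then show ?thesis by (intro poly_eq_zero_if_vanishes_on_inj[where f="\<lambda>z. [:[:z:]:]"]) (auto simp: inj_def)
qed

lemma eval_vec_eqI:
  assumes "\<And>w. eval_vec F w = eval_vec G w"
  shows "F = G"
  using eval_vec_eq_zeroI[of "F - G"] assms by simp

lemma ex_eval2_nonzero:
  assumes "C \<noteq> 0"
  shows "\<exists>x y. x \<noteq> 0 \<and> eval2 C x y \<noteq> 0"
proof (rule ccontr)
  assume "\<not> ?thesis"
  then have "eval2 (C * [:[:0, 1:]:]) x y = 0" for x y by (auto simp: eval2_def)
  then have "C * [:[:0, 1:]:] = 0" by (rule eval2_eq_zeroI)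
  then show False using assms by simp
qed

lemma ex_nontrivial_zero_eval2:
  assumes "\<And>c. C \<noteq> [:[:c:]:]"
  shows "\<exists>x y. (x \<noteq> 0 \<or> y \<noteq> 0) \<and> eval2 C x y = 0"
proof (cases "degree C = 0")
  case True
  then obtain C0 where C: "C = [:C0:]" by (metis degree_eq_zeroE)
  have "degree C0 \<noteq> 0"
    using assms C by (metis degree_eq_zeroE)
  then obtain x where "poly C0 x = 0"
    using fundamental_theorem_of_algebra[of C0] by (auto simp: constant_degree)
  then show ?thesis by (intro exI[of _ x] exI[of _ 1]) (simp add: C eval2_def)
next
  case False
  then have lc: "lead_coeff C \<noteq> 0" by auto
  obtain x0 where x0: "x0 \<notin> {x. poly (lead_coeff C) x = 0} \<union> {0}"
    using ex_new_if_finite[OF infinite_UNIV_char_0] poly_roots_finite[OF lc] by blast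
  define h where "h = map_poly (\<lambda>c. poly c x0) C"
  have "coeff h (degree C) \<noteq> 0" using x0 by (simp add: h_def coeff_map_poly)
  then have "degree h \<noteq> 0" using False le_degree by fastforce
  then obtain y0 where "poly h y0 = 0"
    using fundamental_theorem_of_algebra[of h] by (auto simp: constant_degree)
  then show ?thesis using x0 by (intro exI[of _ x0] exI[of _ y0]) (simp add: eval2_eq_poly_map_poly h_def)
qed

definition scale_vars :: "complex \<Rightarrow> complex poly poly poly \<Rightarrow> complex poly poly poly" where
  "scale_vars c F =
     pcompose (map_poly (\<lambda>C. pcompose (map_poly (\<lambda>p. pcompose p [:0, c:]) C) [:0, [:c:]:]) F)
       [:0, [:[:c:]:]:]"

lemma coeff_scale_vars:
  "coeff (coeff (coeff (scale_vars c F) i) j) k = c ^ (i + j + k) * coeff (coeff (coeff F i) j) k"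
  by (simp add: scale_vars_def coeff_pcompose_linear coeff_map_poly poly_const_pow power_add mult_ac)

lemma eval_vec_scale_vars: "eval_vec (scale_vars c F) w = eval_vec F (c *s w)"
proof -
  define \<phi> where "\<phi> = (\<lambda>C::complex poly poly. pcompose (map_poly (\<lambda>p. pcompose p [:0, c:]) C) [:0, [:c:]:])"
  have hom: "is_ring_hom \<phi>"
    unfolding \<phi>_def
    by (rule is_ring_hom_comp[OF is_ring_hom_pcompose is_ring_hom_map_poly[OF is_ring_hom_pcompose],
          unfolded o_def])
  have \<phi>_const: "\<phi> [:[:a:]:] = [:[:a:]:]" for a by (simp add: \<phi>_def map_poly_pCons)
  have "poly (map_poly \<phi> F) [:[:c * w$3:]:] = \<phi> (poly F [:[:c * w$3:]:])"
    using ring_hom_poly[OF hom, of F "[:[:c * w$3:]:]"] \<phi>_const by simp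
  moreover have "poly (\<phi> X) [:w$2:] = pcompose (poly X [:c * w$2:]) [:0, c:]" for X
  proof -
    have "poly (\<phi> X) [:w$2:] = poly (map_poly (\<lambda>p. pcompose p [:0, c:]) X) [:c * w$2:]"
      by (simp add: \<phi>_def poly_pcompose mult.commute)
    also have "\<dots> = pcompose (poly X [:c * w$2:]) [:0, c:]"
      using ring_hom_poly[OF is_ring_hom_pcompose, of X "[:c * w$2:]"] by simp
    finally show ?thesis .
  qed
  ultimately show ?thesis
    by (simp add: eval_vec_def eval3_def scale_vars_def \<phi>_def[symmetric] poly_pcompose mult.commute)
qed

lemma homogeneous3_eval_smult:
  assumes "homogeneous3 F n"
  shows "eval_vec F (c *s w) = c ^ n * eval_vec F w"
proof -
  have "scale_vars c F = smult [:[:c ^ n:]:] F"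
    by (intro poly_eqI) (use assms in \<open>auto simp: coeff_scale_vars homogeneous3_def poly_const_pow\<close>)
  then show ?thesis by (simp flip: eval_vec_scale_vars)
qed

lemma homogeneous3I_eval_smult:
  assumes "\<And>c w. eval_vec F (c *s w) = c ^ n * eval_vec F w"
  shows "homogeneous3 F n"
  unfolding homogeneous3_def
proof (intro allI impI)
  fix i j k assume nz: "coeff (coeff (coeff F i) j) k \<noteq> 0"
  have "scale_vars 2 F = smult [:[:2 ^ n:]:] F"
    by (rule eval_vec_eqI) (simp add: eval_vec_scale_vars assms)
  then have "coeff (coeff (coeff (scale_vars 2 F) i) j) k = 2 ^ n * coeff (coeff (coeff F i) j) k"
    by (simp add: poly_const_pow)
  with nz have "(2::complex) ^ (i + j + k) = 2 ^ n" by (simp add: coeff_scale_vars)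
  then have "(2::nat) ^ (i + j + k) = 2 ^ n" by (metis of_nat_eq_iff of_nat_numeral of_nat_power)
  then show "i + j + k = n" by simp
qed

lemma eval2_homogeneous:
  assumes "\<And>j k. coeff (coeff C j) k \<noteq> 0 \<Longrightarrow> j + k = m"
  shows "eval2 C (t * x) (t * y) = t ^ m * eval2 C x y"
proof -
  have "homogeneous3 [:C:] m"
    using assms by (auto simp: homogeneous3_def coeff_pCons split: nat.splits)
  from homogeneous3_eval_smult[OF this, of t "vector [x, y, 0]"] show ?thesis
    by (simp add: eval_vec_eq_poly_map_poly map_poly_pCons)
qed

lemma homogeneous3_coeff:
  assumes "homogeneous3 F n" "coeff (coeff (coeff F i) j) k \<noteq> 0"
  shows "j + k = n - i"
  using assms unfolding homogeneous3_def by fastforce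

lemma degree_le_if_homogeneous3:
  assumes "homogeneous3 F n" "F \<noteq> 0"
  shows "degree F \<le> n"
proof -
  have "lead_coeff F \<noteq> 0" using assms by simp
  then obtain j k where "coeff (coeff (lead_coeff F) j) k \<noteq> 0" by (metis poly_eqI coeff_0)
  then show ?thesis using assms(1) unfolding homogeneous3_def by fastforce
qed


definition linear_form :: "complex^3 \<Rightarrow> complex poly poly poly" where
  "linear_form a = [:[:[:0, a$1:], [:a$2:]:], [:[:a$3:]:]:]"

definition compose_linear :: "complex poly poly poly \<Rightarrow> complex^3^3 \<Rightarrow> complex poly poly poly" where
  "compose_linear F A =
     eval3 (map_poly (map_poly (map_poly (\<lambda>c. [:[:[:c:]:]:]))) F)
       (linear_form (A$1)) (linear_form (A$2)) (linear_form (A$3))"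

lemma eval_vec_linear_form: "eval_vec (linear_form (A$i)) w = (A *v w)$i"
  by (simp add: eval_vec_def eval3_def linear_form_def matrix_vector_mult_def sum_3 algebra_simps)

lemma eval_vec_compose_linear: "eval_vec (compose_linear F A) w = eval_vec F (A *v w)"
proof -
  have "eval_vec (compose_linear F A) w =
      eval3 (map_poly (map_poly (map_poly ((\<lambda>P. eval_vec P w) \<circ> (\<lambda>c. [:[:[:c:]:]:])))) F)
        (eval_vec (linear_form (A$1)) w) (eval_vec (linear_form (A$2)) w) (eval_vec (linear_form (A$3)) w)"
    unfolding compose_linear_def
    by (subst ring_hom_eval3[OF is_ring_hom_eval_vec]) (simp add: map_poly_map_poly o_def)
  then show ?thesis by (simp add: o_def eval_vec_linear_form eval_vec_def[of F])
qed

lemma compose_linear_mult: "compose_linear (G * H) A = compose_linear G A * compose_linear H A"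
  by (rule eval_vec_eqI) (simp add: eval_vec_compose_linear)

lemma is_ring_hom_compose_linear: "is_ring_hom (\<lambda>F. compose_linear F A)"
  unfolding is_ring_hom_def by (auto intro!: eval_vec_eqI simp: eval_vec_compose_linear)

lemma compose_linear_compose_linear:
  "compose_linear (compose_linear F A) B = compose_linear F (A ** B)"
  by (rule eval_vec_eqI) (simp add: eval_vec_compose_linear matrix_vector_mul_assoc)

lemma compose_linear_mat_1: "compose_linear F (mat 1) = F"
  by (rule eval_vec_eqI) (simp add: eval_vec_compose_linear)

lemma homogeneous3_compose_linear:
  assumes "homogeneous3 F n"
  shows "homogeneous3 (compose_linear F A) n"
  by (rule homogeneous3I_eval_smult)
    (simp add: eval_vec_compose_linear vector_scalar_commute homogeneous3_eval_smult[OF assms])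

lemma invertibleE:
  fixes A :: "complex^3^3"
  assumes "invertible A"
  obtains B where "A ** B = mat 1" "B ** A = mat 1" "\<And>w. A *v (B *v w) = w" "\<And>w. B *v (A *v w) = w"
  using assms unfolding invertible_def by (metis matrix_vector_mul_assoc matrix_vector_mul_lid)

lemma irreducible_compose_linear_imp:
  assumes "invertible A" "irreducible (compose_linear F A)"
  shows "irreducible F"
proof -
  obtain B where "A ** B = mat 1"
    using invertibleE[OF assms(1)] by metis
  then show ?thesis
    by (intro irreducible_if_irreducible_ring_hom_image[OF is_ring_hom_compose_linear
          is_ring_hom_compose_linear _ assms(2), of B])
      (simp add: compose_linear_compose_linear compose_linear_mat_1)
qed

lemma has_linear_component_compose_linear_imp:
  assumes "invertible A" "has_linear_component (compose_linear F A)"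
  shows "has_linear_component F"
proof -
  obtain B where AB: "A ** B = mat 1" "\<And>w. B *v (A *v w) = w"
    using invertibleE[OF assms(1)] by metis
  obtain L where L: "L \<noteq> 0" "homogeneous3 L 1" "L dvd compose_linear F A"
    using assms(2) by (auto simp: has_linear_component_def)
  have F: "F = compose_linear (compose_linear F A) B"
    by (simp add: compose_linear_compose_linear AB compose_linear_mat_1)
  have "compose_linear L B \<noteq> 0"
  proof
    assume "compose_linear L B = 0"
    then have "eval_vec L w = 0" for w
      using eval_vec_compose_linear[of L B "A *v w"] AB by simp
    then show False using L(1) eval_vec_eq_zeroI by blast
  qed
  moreover have "compose_linear L B dvd F"
    using L(3) F by (metis compose_linear_mult dvd_def)
  ultimately show ?thesis
    using homogeneous3_compose_linear[OF L(2)] by (auto simp: has_linear_component_def)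
qed


definition columns3 :: "complex^3 \<Rightarrow> complex^3 \<Rightarrow> complex^3 \<Rightarrow> complex^3^3" where
  "columns3 a b c = (\<chi> i j. if j = 1 then a$i else if j = 2 then b$i else c$i)"

lemma columns3_mult: "columns3 a b c *v w = w$1 *s a + w$2 *s b + w$3 *s c"
  by (simp add: vec_eq_iff matrix_vector_mult_def sum_3 columns3_def algebra_simps)

lemma cross_product_nonzero:
  fixes a b :: "complex^3"
  assumes "a \<noteq> 0" "\<forall>k. b \<noteq> k *s a"
  shows "a$2*b$3 - a$3*b$2 \<noteq> 0 \<or> a$3*b$1 - a$1*b$3 \<noteq> 0 \<or> a$1*b$2 - a$2*b$1 \<noteq> 0"
proof (rule ccontr)
  assume "\<not> ?thesis"
  then have c: "a$2*b$3 = a$3*b$2" "a$3*b$1 = a$1*b$3" "a$1*b$2 = a$2*b$1" by auto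
  from assms(1) obtain i where "a$i \<noteq> 0" by (auto simp: vec_eq_iff)
  then have "b = (b$i / a$i) *s a"
    using c exhaust_3[of i] by (auto simp: vec_eq_iff forall_3 field_simps)
  then show False using assms(2) by blast
qed

lemma ex_invertible_columns3:
  fixes a b :: "complex^3"
  assumes "a \<noteq> 0" "\<forall>k. b \<noteq> k *s a"
  shows "\<exists>c. invertible (columns3 a b c) \<and> invertible (columns3 b c a)"
proof -
  have det: "det (columns3 a b c) =
      (a$2*b$3 - a$3*b$2)*c$1 + (a$3*b$1 - a$1*b$3)*c$2 + (a$1*b$2 - a$2*b$1)*c$3"
    "det (columns3 b c a) = det (columns3 a b c)" for c
    by (simp add: det_3 columns3_def algebra_simps, simp add: det_3 columns3_def)
  from cross_product_nonzero[OF assms] have "\<exists>c. det (columns3 a b c) \<noteq> 0"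
    by (elim disjE; intro exI[of _ "vector [1, 0, 0]"] exI[of _ "vector [0, 1, 0]"]
        exI[of _ "vector [0, 0, 1]"]; simp add: det(1))
  then show ?thesis using det(2) by (auto simp: invertible_det_nz)
qed

abbreviation line_span :: "complex^3 \<Rightarrow> complex^3 \<Rightarrow> (complex^3) set" where
  "line_span p v \<equiv> {w. \<exists>a b. w = a *s p + b *s v}"

lemma line_span_change_direction:
  assumes "\<alpha> \<noteq> 0"
  shows "line_span p v = line_span p (\<alpha> *s v + \<beta> *s p)"
proof (intro set_eqI iffI; elim CollectE exE; intro CollectI)
  fix w a b assume "w = a *s p + b *s v"
  then show "\<exists>a b. w = a *s p + b *s (\<alpha> *s v + \<beta> *s p)" using assms
    by (intro exI[of _ "a - b * \<beta> / \<alpha>"] exI[of _ "b / \<alpha>"]) (simp add: vec_eq_iff field_simps)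
next
  fix w a b assume "w = a *s p + b *s (\<alpha> *s v + \<beta> *s p)"
  then show "\<exists>a b. w = a *s p + b *s v"
    by (intro exI[of _ "a + b * \<beta>"] exI[of _ "b * \<alpha>"]) (simp add: vec_eq_iff field_simps)
qed

lemma image_line_span:
  fixes A :: "complex^3^3"
  shows "(*v) A ` line_span p v = line_span (A *v p) (A *v v)"
proof -
  have "A *v (a *s p + b *s v) = a *s (A *v p) + b *s (A *v v)" for a b
    by (simp add: matrix_vector_right_distrib vector_scalar_commute)
  then show ?thesis by (auto simp: image_def) metis+
qed

lemma poly_restr_line: "poly (restr_line F p v) t = eval_vec F (p + t *s v)"
proof -
  have "poly (restr_line F p v) t =
      eval3 (map_poly (map_poly (map_poly ((\<lambda>q. poly q t) \<circ> (\<lambda>c. [:c:])))) F)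
        (p$1 + t * v$1) (p$2 + t * v$2) (p$3 + t * v$3)"
    unfolding restr_line_def
    by (subst ring_hom_eval3[OF is_ring_hom_poly_eval]) (simp add: map_poly_map_poly o_def algebra_simps)
  then show ?thesis by (simp add: o_def eval_vec_def)
qed

lemma coeff_0_restr_line: "coeff (restr_line F p v) 0 = eval_vec F p"
  by (simp add: poly_0_coeff_0[symmetric] poly_restr_line)

lemma restr_line_mult: "restr_line (G * H) p v = restr_line G p v * restr_line H p v"
  by (rule poly_eq_poly_eq_iff[THEN iffD1]) (simp add: fun_eq_iff poly_restr_line)

lemma restr_line_compose_linear:
  "restr_line (compose_linear F A) w v = restr_line F (A *v w) (A *v v)"
  by (rule poly_eq_poly_eq_iff[THEN iffD1])
    (simp add: fun_eq_iff poly_restr_line eval_vec_compose_linear matrix_vector_right_distrib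
      vector_scalar_commute)

lemma restr_line_along_point:
  assumes "homogeneous3 F n" "eval_vec F p = 0"
  shows "restr_line F p (k *s p) = 0"
proof -
  have "eval_vec F (p + t *s (k *s p)) = eval_vec F ((1 + t * k) *s p)" for t
    by (rule arg_cong[where f="eval_vec F"]) (simp add: vec_eq_iff algebra_simps)
  then have "poly (restr_line F p (k *s p)) t = 0" for t
    using assms by (simp only: poly_restr_line homogeneous3_eval_smult) simp
  then show ?thesis by (intro poly_eq_poly_eq_iff[THEN iffD1]) auto
qed

lemma coeff_restr_line_below_multiplicity:
  assumes "k < point_multiplicity F p"
  shows "coeff (restr_line F p v) k = 0"
  using not_less_Least[OF assms[unfolded point_multiplicity_def]] by blast

lemma ex_direction_attaining_multiplicity:
  assumes "F \<noteq> 0"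
  shows "\<exists>u. coeff (restr_line F p u) (point_multiplicity F p) \<noteq> 0"
proof -
  obtain w where "eval_vec F w \<noteq> 0" using assms eval_vec_eq_zeroI by blast
  then have "poly (restr_line F p (w - p)) 1 \<noteq> 0" by (simp add: poly_restr_line)
  then have "\<exists>m v. coeff (restr_line F p v) m \<noteq> 0" by (metis poly_eqI coeff_0 poly_0)
  then show ?thesis
    unfolding point_multiplicity_def by (rule LeastI_ex)
qed

lemma ex_matrix_vector_mult_iff:
  fixes A :: "complex^3^3"
  assumes "invertible A"
  shows "(\<exists>v. P (A *v v)) \<longleftrightarrow> (\<exists>v. P v)"
  using invertibleE[OF assms] by metis

lemma all_matrix_vector_mult_iff:
  fixes A :: "complex^3^3"
  assumes "invertible A"
  shows "(\<forall>v. P (A *v v)) \<longleftrightarrow> (\<forall>v. P v)"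
  using ex_matrix_vector_mult_iff[OF assms, of "\<lambda>v. \<not> P v"] by blast

lemma compose_linear_eq_0_iff:
  assumes "invertible A"
  shows "compose_linear F A = 0 \<longleftrightarrow> F = 0"
proof
  assume "compose_linear F A = 0"
  then have "\<forall>w. eval_vec F (A *v w) = 0" using eval_vec_compose_linear[of F A] by simp
  then show "F = 0"
    using all_matrix_vector_mult_iff[OF assms, of "\<lambda>v. eval_vec F v = 0"] eval_vec_eq_zeroI by simp
qed (simp add: compose_linear_def eval3_def)

lemma point_multiplicity_compose_linear:
  assumes "invertible A"
  shows "point_multiplicity (compose_linear F A) w = point_multiplicity F (A *v w)"
  by (simp add: point_multiplicity_def restr_line_compose_linear
      ex_matrix_vector_mult_iff[OF assms, of "\<lambda>v. coeff (restr_line F (A *v w) v) _ \<noteq> 0"])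

lemma singular_point_compose_linear:
  assumes "invertible A"
  shows "singular_point (compose_linear F A) w \<longleftrightarrow> singular_point F (A *v w)"
proof -
  have "A *v w = 0 \<longleftrightarrow> w = 0"
    using inj_matrix_vector_mult[OF assms] by (metis injD matrix_vector_mult_0_right)
  then show ?thesis
    unfolding singular_point_def restr_line_compose_linear all_matrix_vector_mult_iff[OF assms,
          of "\<lambda>v. coeff (restr_line F (A *v w) v) 0 = 0 \<and> coeff (restr_line F (A *v w) v) 1 = 0"]
    by simp
qed

lemma tangent_lines_compose_linear:
  assumes "invertible A"
  shows "tangent_lines F (A *v w) = (\<lambda>T. (*v) A ` T) ` tangent_lines (compose_linear F A) w"
proof -
  define m where "m = point_multiplicity F (A *v w)"
  define P where "P = (\<lambda>v. (\<forall>c. v \<noteq> c *s (A *v w)) \<and> coeff (restr_line F (A *v w) v) m = 0)"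
  have m: "point_multiplicity (compose_linear F A) w = m"
    by (simp add: m_def point_multiplicity_compose_linear[OF assms])
  have "A *v v = c *s (A *v w) \<longleftrightarrow> v = c *s w" for v c
    using inj_matrix_vector_mult[OF assms] by (metis injD vector_scalar_commute)
  then have P: "(\<forall>c. v \<noteq> c *s w) \<and> coeff (restr_line (compose_linear F A) w v) m = 0 \<longleftrightarrow> P (A *v v)"
    for v by (simp add: P_def restr_line_compose_linear)
  have "tangent_lines F (A *v w) = {line_span (A *v w) v | v. P v}"
    by (simp add: tangent_lines_def P_def m_def)
  also have "\<dots> = {line_span (A *v w) (A *v v) | v. P (A *v v)}"
    by (intro Collect_cong ex_matrix_vector_mult_iff[OF assms, symmetric])
  also have "\<dots> = (\<lambda>T. (*v) A ` T) ` tangent_lines (compose_linear F A) w"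
    unfolding tangent_lines_def m P image_line_span[symmetric] by blast
  finally show ?thesis .
qed

lemma ordinary_singular_point_compose_linear:
  assumes "invertible A"
  shows "ordinary_singular_point (compose_linear F A) w \<mu> \<longleftrightarrow> ordinary_singular_point F (A *v w) \<mu>"
proof -
  have "inj_on (\<lambda>T. (*v) A ` T) X" for X
    using inj_image_eq_iff[OF inj_matrix_vector_mult[OF assms]] by (auto simp: inj_on_def)
  then have "finite (tangent_lines (compose_linear F A) w) \<longleftrightarrow> finite (tangent_lines F (A *v w))"
    "card (tangent_lines (compose_linear F A) w) = card (tangent_lines F (A *v w))"
    by (simp_all add: tangent_lines_compose_linear[OF assms] finite_image_iff card_image)
  then show ?thesis
    by (simp add: ordinary_singular_point_def singular_point_compose_linear[OF assms]
        point_multiplicity_compose_linear[OF assms])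
qed

lemma two_le_point_multiplicity:
  assumes "singular_point F p" "F \<noteq> 0"
  shows "2 \<le> point_multiplicity F p"
  using ex_direction_attaining_multiplicity[OF assms(2), of p] assms(1)
  by (metis One_nat_def less_2_cases not_le singular_point_def)

lemma poly_altdef_le:
  fixes p :: "'a::comm_semiring_1 poly"
  assumes "degree p \<le> N"
  shows "poly p x = (\<Sum>i\<le>N. coeff p i * x ^ i)"
  unfolding poly_altdef using assms
  by (intro sum.mono_neutral_left) (auto simp: coeff_eq_0)

definition e1 :: "complex^3" where "e1 = vector [1, 0, 0]"
definition e2 :: "complex^3" where "e2 = vector [0, 1, 0]"
definition e3 :: "complex^3" where "e3 = vector [0, 0, 1]"

text \<open>In the affine chart \<open>z = 1\<close> around \<open>e3\<close>, the coefficient of \<open>z\<^sup>i\<close> in \<open>F\<close> is a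
  binary form of degree \<open>n - i\<close>; the lowest-order term of \<open>F\<close> at \<open>e3\<close> therefore comes from
  the leading coefficient in \<open>z\<close>.\<close>

lemma restr_line_e3_expansion:
  assumes "homogeneous3 F n" "F \<noteq> 0"
  shows "restr_line F e3 w =
    (\<Sum>i\<le>degree F. smult (eval2 (coeff F i) (w$1) (w$2)) (monom 1 (n - i) * [:1, w$3:] ^ i))"
proof (rule poly_eq_poly_eq_iff[THEN iffD1, OF ext])
  fix t
  have "poly (restr_line F e3 w) t =
      poly (map_poly (\<lambda>C. eval2 C (t * w$1) (t * w$2)) F) (1 + t * w$3)"
    by (simp add: poly_restr_line eval_vec_eq_poly_map_poly e3_def)
  also have "\<dots> = (\<Sum>i\<le>degree F. eval2 (coeff F i) (t * w$1) (t * w$2) * (1 + t * w$3) ^ i)"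
    by (subst poly_altdef_le[OF map_poly_degree_leq]) (simp add: coeff_map_poly)
  also have "\<dots> = (\<Sum>i\<le>degree F. eval2 (coeff F i) (w$1) (w$2) * (t ^ (n - i) * (1 + t * w$3) ^ i))"
    using homogeneous3_coeff[OF assms(1)] by (simp add: eval2_homogeneous mult_ac)
  also have "\<dots> = poly (\<Sum>i\<le>degree F. smult (eval2 (coeff F i) (w$1) (w$2))
      (monom 1 (n - i) * [:1, w$3:] ^ i)) t"
    by (simp add: poly_sum poly_monom mult_ac)
  finally show "poly (restr_line F e3 w) t = \<dots>" .
qed

lemma coeff_restr_line_e3_low:
  assumes "homogeneous3 F n" "F \<noteq> 0" "k < n - degree F"
  shows "coeff (restr_line F e3 w) k = 0"
proof -
  have "coeff (monom (1::complex) (n - i) * [:1, w$3:] ^ i) k = 0" if "i \<le> degree F" for i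
    using that assms(3) by (simp add: coeff_monom_mult)
  then show ?thesis by (simp add: restr_line_e3_expansion[OF assms(1,2)] coeff_sum)
qed

lemma coeff_restr_line_e3_lead:
  assumes "homogeneous3 F n" "F \<noteq> 0"
  shows "coeff (restr_line F e3 w) (n - degree F) = eval2 (lead_coeff F) (w$1) (w$2)"
proof -
  have "coeff (monom (1::complex) (n - i) * [:1, w$3:] ^ i) (n - degree F) = (if i = degree F then 1 else 0)"
    if "i \<le> degree F" for i
    using that degree_le_if_homogeneous3[OF assms] by (auto simp: coeff_monom_mult coeff_0_power)
  then have "coeff (restr_line F e3 w) (n - degree F) =
      (\<Sum>i\<le>degree F. eval2 (coeff F i) (w$1) (w$2) * (if i = degree F then 1 else 0))"
    by (simp add: restr_line_e3_expansion[OF assms] coeff_sum)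
  then show ?thesis by (simp add: sum.delta' if_distrib cong: if_cong)
qed

lemma point_multiplicity_e3:
  assumes "homogeneous3 F n" "F \<noteq> 0"
  shows "point_multiplicity F e3 = n - degree F"
  unfolding point_multiplicity_def
proof (rule Least_equality)
  obtain x y where "eval2 (lead_coeff F) x y \<noteq> 0"
    using ex_eval2_nonzero assms(2) by (metis leading_coeff_0_iff)
  then show "\<exists>v. coeff (restr_line F e3 v) (n - degree F) \<noteq> 0"
    by (intro exI[of _ "vector [x, y, 0]"]) (simp add: coeff_restr_line_e3_lead[OF assms])
next
  show "n - degree F \<le> m" if "\<exists>v. coeff (restr_line F e3 v) m \<noteq> 0" for m
    using that coeff_restr_line_e3_low[OF assms] not_le by blast
qed

lemma poly_eq_monom_if_single_coeff:
  assumes "\<And>k. coeff c k \<noteq> 0 \<Longrightarrow> k = m"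
  shows "c = monom (coeff c m) m"
  by (intro poly_eqI) (use assms in \<open>auto simp: coeff_monom\<close>)

lemma coeff_poly_binary_form:
  fixes C :: "complex poly poly"
  assumes "\<And>j k. coeff (coeff C j) k \<noteq> 0 \<Longrightarrow> j + k = m"
  shows "coeff (poly C [:y:]) k = (if k \<le> m then y ^ (m - k) * coeff (coeff C (m - k)) k else 0)"
proof -
  have "poly C [:y:] = (\<Sum>j\<le>degree C + m. coeff C j * [:y:] ^ j)" by (rule poly_altdef_le) simp
  then have "coeff (poly C [:y:]) k = (\<Sum>j\<le>degree C + m. y ^ j * coeff (coeff C j) k)"
    by (simp add: coeff_sum poly_const_pow mult.commute)
  also have "\<dots> = (\<Sum>j\<le>degree C + m. if j = m - k \<and> k \<le> m then y ^ j * coeff (coeff C j) k else 0)"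
    by (intro sum.cong refl) (use assms in fastforce)
  also have "\<dots> = (if k \<le> m then y ^ (m - k) * coeff (coeff C (m - k)) k else 0)"
    by (cases "k \<le> m") (simp_all add: sum.delta' cong: conj_cong)
  finally show ?thesis .
qed

lemma eval2_binary_form_1_0:
  fixes C :: "complex poly poly"
  assumes "\<And>j k. coeff (coeff C j) k \<noteq> 0 \<Longrightarrow> j + k = m"
  shows "eval2 C 1 0 = coeff (coeff C 0) m"
proof -
  have "coeff C 0 = monom (coeff (coeff C 0) m) m"
    by (rule poly_eq_monom_if_single_coeff) (use assms[of 0] in simp)
  then show ?thesis by (metis eval2_def poly_0_coeff_0 pCons_0_0 poly_monom power_one mult_1_right)
qed

lemma card_roots_le_if_common_root:
  fixes g h :: "complex poly"
  assumes "g * h \<noteq> 0" "degree (g * h) \<le> m" "poly g r = 0" "poly h r = 0"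
  shows "card {x. poly (g * h) x = 0} \<le> m - 1"
proof -
  obtain g1 h1 where "g = [:-r, 1:] * g1" "h = [:-r, 1:] * h1"
    using assms(3,4) poly_eq_0_iff_dvd by (metis dvdE)
  then have gh: "g * h = [:-r, 1:] * ([:-r, 1:] * g1 * h1)" by (simp only: ac_simps)
  define S where "S = [:-r, 1:] * g1 * h1"
  have S0: "S \<noteq> 0" using assms(1) gh S_def by auto
  have "{x. poly (g * h) x = 0} = {x. poly S x = 0}" by (auto simp: gh S_def)
  moreover have "degree ([:-r, 1:] * S) = degree [:-r, 1:] + degree S"
    using S0 by (intro degree_mult_eq) auto
  then have "degree (g * h) = Suc (degree S)" unfolding gh S_def[symmetric] by simp
  ultimately show ?thesis using card_poly_roots_bound[OF S0] assms(2) by simp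
qed

text \<open>As the direction \<open>e1\<close> is not tangent, every tangent line at \<open>e3\<close> meets the line
  \<open>y = y0, z = 0\<close>, at a root of the dehomogenised tangent cone.\<close>

lemma tangent_lines_e3_subset_roots:
  assumes hom: "homogeneous3 F n" and F0: "F \<noteq> 0"
    and e1: "eval2 (lead_coeff F) 1 0 \<noteq> 0" and y0: "y0 \<noteq> 0"
  shows "tangent_lines F e3 \<subseteq>
    (\<lambda>r. line_span e3 (vector [r, y0, 0])) ` {r. eval2 (lead_coeff F) r y0 = 0}"
proof
  have scale: "eval2 (lead_coeff F) (t * x) (t * y) = t ^ (n - degree F) * eval2 (lead_coeff F) x y"
    for t x y using homogeneous3_coeff[OF hom] by (intro eval2_homogeneous) simp
  fix T assume "T \<in> tangent_lines F e3"
  then obtain v where T: "T = line_span e3 v" and v: "\<forall>c. v \<noteq> c *s e3"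
    and "coeff (restr_line F e3 v) (n - degree F) = 0"
    unfolding tangent_lines_def point_multiplicity_e3[OF hom F0] by blast
  then have v_root: "eval2 (lead_coeff F) (v$1) (v$2) = 0"
    by (simp add: coeff_restr_line_e3_lead[OF hom F0])
  have "v$2 \<noteq> 0"
  proof
    assume v2: "v$2 = 0"
    then have "v$1 \<noteq> 0" using v[rule_format, of "v$3"] by (auto simp: vec_eq_iff forall_3 e3_def)
    then show False using v_root e1 v2 scale[of "v$1" 1 0] by simp
  qed
  define \<alpha> where "\<alpha> = y0 / v$2"
  have "\<alpha> \<noteq> 0" using y0 \<open>v$2 \<noteq> 0\<close> by (simp add: \<alpha>_def)
  have "eval2 (lead_coeff F) (\<alpha> * v$1) y0 = 0"
    using scale[of \<alpha> "v$1" "v$2"] v_root \<open>v$2 \<noteq> 0\<close> by (simp add: \<alpha>_def)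
  moreover have "vector [\<alpha> * v$1, y0, 0] = \<alpha> *s v + (- (\<alpha> * v$3)) *s e3"
    using \<open>v$2 \<noteq> 0\<close> by (simp add: vec_eq_iff forall_3 e3_def \<alpha>_def)
  ultimately show "T \<in> (\<lambda>r. line_span e3 (vector [r, y0, 0])) ` {r. eval2 (lead_coeff F) r y0 = 0}"
    unfolding T line_span_change_direction[OF \<open>\<alpha> \<noteq> 0\<close>, of e3 v "- (\<alpha> * v$3)"] by force
qed

lemma ordinary_e3_lead_coeff_factors_coprime:
  assumes hom: "homogeneous3 F n" and F0: "F \<noteq> 0"
    and ord: "ordinary_singular_point F e3 \<mu>" and e1: "eval2 (lead_coeff F) 1 0 \<noteq> 0"
    and fac: "lead_coeff F = g * h"
    and xy: "x0 \<noteq> 0 \<or> y0 \<noteq> 0" and g: "eval2 g x0 y0 = 0" and h: "eval2 h x0 y0 = 0"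
  shows False
proof -
  have \<mu>: "\<mu> = n - degree F"
    using ord point_multiplicity_e3[OF hom F0] by (simp add: ordinary_singular_point_def)
  have "2 \<le> \<mu>"
    using ord two_le_point_multiplicity[OF _ F0] by (auto simp: ordinary_singular_point_def)
  have form: "j + k = \<mu>" if "coeff (coeff (lead_coeff F) j) k \<noteq> 0" for j k
    using homogeneous3_coeff[OF hom that] \<mu> by simp
  have "y0 \<noteq> 0"
  proof
    assume "y0 = 0"
    then have "eval2 (lead_coeff F) (x0 * 1) (x0 * 0) = 0" using g by (simp add: fac)
    moreover have "x0 \<noteq> 0" using xy \<open>y0 = 0\<close> by simp
    ultimately show False
      using e1 eval2_homogeneous[of "lead_coeff F" \<mu> x0 1 0] form by simp
  qed
  define s where "s = poly (lead_coeff F) [:y0:]"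
  have "coeff s \<mu> = eval2 (lead_coeff F) 1 0"
    by (simp add: s_def coeff_poly_binary_form[OF form] eval2_binary_form_1_0[OF form])
  then have "s \<noteq> 0" using e1 by auto
  have "degree s \<le> \<mu>"
    by (rule degree_le) (simp add: s_def coeff_poly_binary_form[OF form])
  have "s = poly g [:y0:] * poly h [:y0:]" by (simp add: s_def fac)
  then have "card {r. poly s r = 0} \<le> \<mu> - 1"
    using card_roots_le_if_common_root \<open>s \<noteq> 0\<close> \<open>degree s \<le> \<mu>\<close> g h
    by (simp add: eval2_def)
  moreover have "card (tangent_lines F e3) \<le> card {r. poly s r = 0}"
    using tangent_lines_e3_subset_roots[OF hom F0 e1 \<open>y0 \<noteq> 0\<close>] poly_roots_finite[OF \<open>s \<noteq> 0\<close>]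
    by (simp add: s_def eval2_def) (meson card_image_le card_mono finite_imageI le_trans)
  ultimately show False
    using ord \<open>2 \<le> \<mu>\<close> by (simp add: ordinary_singular_point_def)
qed



definition meet_off_e3 :: "complex poly poly poly \<Rightarrow> complex poly poly poly \<Rightarrow> bool" where
  "meet_off_e3 G H \<longleftrightarrow> (\<exists>x y z. (x \<noteq> 0 \<or> y \<noteq> 0) \<and>
     eval_vec G (vector [x, y, z]) = 0 \<and> eval_vec H (vector [x, y, z]) = 0)"

definition lead_coeffs_meet :: "complex poly poly poly \<Rightarrow> complex poly poly poly \<Rightarrow> bool" where
  "lead_coeffs_meet G H \<longleftrightarrow> (\<exists>x y. (x \<noteq> 0 \<or> y \<noteq> 0) \<and>
     eval2 (lead_coeff G) x y = 0 \<and> eval2 (lead_coeff H) x y = 0)"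

lemma meet_off_e3_commute: "meet_off_e3 G H \<longleftrightarrow> meet_off_e3 H G"
  by (auto simp: meet_off_e3_def)

lemma lead_coeffs_meet_commute: "lead_coeffs_meet G H \<longleftrightarrow> lead_coeffs_meet H G"
  by (auto simp: lead_coeffs_meet_def)

lemma eval_vec_degree_le_1:
  assumes "degree G \<le> 1"
  shows "eval_vec G (vector [x, y, z]) = eval2 (coeff G 0) x y + z * eval2 (coeff G 1) x y"
proof -
  have "eval_vec G (vector [x, y, z]) = poly (map_poly (\<lambda>C. eval2 C x y) G) z"
    by (simp add: eval_vec_eq_poly_map_poly)
  also have "\<dots> = (\<Sum>i\<le>1. coeff (map_poly (\<lambda>C. eval2 C x y) G) i * z ^ i)"
    using assms map_poly_degree_leq[of "\<lambda>C. eval2 C x y" G] by (intro poly_altdef_le) linarith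
  finally show ?thesis by (simp add: coeff_map_poly mult_ac)
qed

lemma meet_if_degree_0:
  assumes G: "degree G = 0" "\<And>c. G \<noteq> [:[:[:c:]:]:]" and H: "degree H \<noteq> 0"
  shows "meet_off_e3 G H \<or> lead_coeffs_meet G H"
proof -
  obtain g where g: "G = [:g:]" using G(1) by (metis degree_eq_zeroE)
  have "g \<noteq> [:[:c:]:]" for c using G(2) g by auto
  then obtain x0 y0 where xy: "x0 \<noteq> 0 \<or> y0 \<noteq> 0" "eval2 g x0 y0 = 0"
    using ex_nontrivial_zero_eval2 by blast
  define h where "h = map_poly (\<lambda>C. eval2 C x0 y0) H"
  have G0: "eval_vec G (vector [x0, y0, z]) = 0" for z
    using xy by (simp add: g eval_vec_eq_poly_map_poly map_poly_pCons)
  have H_h: "eval_vec H (vector [x0, y0, z]) = poly h z" for z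
    by (simp add: h_def eval_vec_eq_poly_map_poly)
  show ?thesis
  proof (cases "degree h = 0")
    case True
    then have "eval2 (lead_coeff H) x0 y0 = 0"
      using H coeff_eq_0[of h "degree H"] by (simp add: h_def coeff_map_poly)
    then show ?thesis using xy by (auto simp: lead_coeffs_meet_def g)
  next
    case False
    then obtain z0 where "poly h z0 = 0"
      using fundamental_theorem_of_algebra[of h] by (auto simp: constant_degree)
    then have "meet_off_e3 G H" unfolding meet_off_e3_def using xy(1) G0 H_h by metis
    then show ?thesis ..
  qed
qed

lemma meet_if_degree_1:
  assumes G: "degree G = 1" and H: "degree H = 1"
    and vanish: "\<And>z. eval_vec (G * H) (vector [0, 0, z]) = 0"
  shows "meet_off_e3 G H \<or> lead_coeffs_meet G H"
proof -
  define g0 g1 h0 h1 where "g0 = coeff G 0" "g1 = coeff G 1" "h0 = coeff H 0" "h1 = coeff H 1"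
  have evG: "eval_vec G (vector [x, y, z]) = eval2 g0 x y + z * eval2 g1 x y" for x y z
    by (simp add: eval_vec_degree_le_1 G g0_g1_h0_h1_def)
  have evH: "eval_vec H (vector [x, y, z]) = eval2 h0 x y + z * eval2 h1 x y" for x y z
    by (simp add: eval_vec_degree_le_1 H g0_g1_h0_h1_def)
  define R where "R = g1 * h0 - g0 * h1"
  \<comment> \<open>the resultant of \<open>G\<close> and \<open>H\<close> as linear polynomials in \<open>z\<close>; if it is
    constant, it vanishes since \<open>G\<close> or \<open>H\<close> vanishes on the whole line \<open>x = y = 0\<close>\<close>
  have "\<exists>x y. (x \<noteq> 0 \<or> y \<noteq> 0) \<and> eval2 R x y = 0"
  proof (cases "\<exists>c. R = [:[:c:]:]")
    case True
    then obtain c where c: "R = [:[:c:]:]" by blast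
    define GZ HZ where "GZ = map_poly (\<lambda>C. eval2 C 0 0) G" "HZ = map_poly (\<lambda>C. eval2 C 0 0) H"
    have "poly (GZ * HZ) z = 0" for z
      using vanish[of z] unfolding eval_vec_simps(2) by (simp add: GZ_HZ_def eval_vec_eq_poly_map_poly)
    then have "GZ * HZ = 0" by (intro poly_eq_poly_eq_iff[THEN iffD1]) auto
    then have "(coeff GZ 0 = 0 \<and> coeff GZ 1 = 0) \<or> (coeff HZ 0 = 0 \<and> coeff HZ 1 = 0)" by auto
    then have "(eval2 g0 0 0 = 0 \<and> eval2 g1 0 0 = 0) \<or> (eval2 h0 0 0 = 0 \<and> eval2 h1 0 0 = 0)"
      by (simp add: GZ_HZ_def g0_g1_h0_h1_def coeff_map_poly)
    then have "eval2 R 0 0 = 0" by (auto simp: R_def)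
    then have "c = 0" using c by simp
    then show ?thesis using c by (intro exI[of _ 1] exI[of _ 0]) simp
  qed (use ex_nontrivial_zero_eval2 in blast)
  then obtain x0 y0 where xy: "x0 \<noteq> 0 \<or> y0 \<noteq> 0" and R0: "eval2 R x0 y0 = 0" by blast
  define a0 a1 b0 b1 where
    "a0 = eval2 g0 x0 y0" "a1 = eval2 g1 x0 y0" "b0 = eval2 h0 x0 y0" "b1 = eval2 h1 x0 y0"
  have R0: "a1 * b0 = a0 * b1" using R0 by (simp add: R_def a0_a1_b0_b1_def)
  consider "a1 \<noteq> 0" | "a1 = 0" "b1 = 0" | "a1 = 0" "b1 \<noteq> 0" by blast
  then show ?thesis
  proof cases
    case 1
    have "eval_vec G (vector [x0, y0, - a0 / a1]) = 0" "eval_vec H (vector [x0, y0, - a0 / a1]) = 0"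
      using 1 R0 by (simp_all add: evG evH a0_a1_b0_b1_def[symmetric] field_simps)
    then have "meet_off_e3 G H" unfolding meet_off_e3_def using xy by blast
    then show ?thesis ..
  next
    case 2
    then show ?thesis using xy G H
      by (auto simp: lead_coeffs_meet_def g0_g1_h0_h1_def a0_a1_b0_b1_def)
  next
    case 3
    have "eval_vec G (vector [x0, y0, - b0 / b1]) = 0" "eval_vec H (vector [x0, y0, - b0 / b1]) = 0"
      using 3 R0 by (simp_all add: evG evH a0_a1_b0_b1_def[symmetric] field_simps)
    then have "meet_off_e3 G H" unfolding meet_off_e3_def using xy by blast
    then show ?thesis ..
  qed
qed

lemma singular_point_if_common_zero:
  assumes "F = G * H" "w \<noteq> 0" "eval_vec G w = 0" "eval_vec H w = 0"
  shows "singular_point F w"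
  unfolding singular_point_def
proof (intro conjI allI)
  fix v
  have "coeff (restr_line G w v) 0 = 0" "coeff (restr_line H w v) 0 = 0"
    using assms(3,4) by (simp_all add: coeff_0_restr_line)
  then show "coeff (restr_line F w v) 0 = 0" "coeff (restr_line F w v) 1 = 0"
    by (simp_all add: assms(1) restr_line_mult coeff_mult)
qed fact

lemma not_unit_if_homogeneous3:
  assumes "homogeneous3 F n" "n \<ge> 1"
  shows "\<not> F dvd 1"
proof
  assume "F dvd 1"
  then obtain G where "1 = F * G" by (rule dvdE)
  then have "eval_vec F 0 * eval_vec G 0 = 1" by (metis eval_vec_simps(2,5))
  moreover have "eval_vec F 0 = 0"
    using homogeneous3_eval_smult[OF assms(1), of 0 0] assms(2) by (simp add: power_0_left)
  ultimately show False by simp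
qed

lemma nonconstant_if_not_unit:
  fixes G :: "complex poly poly poly"
  assumes "G \<noteq> 0" "\<not> G dvd 1"
  shows "G \<noteq> [:[:[:c:]:]:]"
proof
  assume G: "G = [:[:[:c:]:]:]"
  then have "c \<noteq> 0" using assms(1) by simp
  then have "G * [:[:[:inverse c:]:]:] = 1" by (intro eval_vec_eqI) (simp add: G)
  then show False using assms(2) by (metis dvdI)
qed

lemma not_meet_off_e3_if_only_singular_e3:
  assumes FGH: "F = G * H" and only: "\<forall>w. singular_point F w \<longrightarrow> proj_eq e3 w"
  shows "\<not> meet_off_e3 G H"
proof
  assume "meet_off_e3 G H"
  then obtain x y z where xy: "x \<noteq> 0 \<or> y \<noteq> 0"
    and "eval_vec G (vector [x, y, z]) = 0" "eval_vec H (vector [x, y, z]) = 0"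
    by (auto simp: meet_off_e3_def)
  then have "singular_point F (vector [x, y, z])"
    by (intro singular_point_if_common_zero[OF FGH]) (auto simp: vec_eq_iff forall_3)
  then obtain c where "vector [x, y, z] = c *s e3" using only by (auto simp: proj_eq_def)
  then show False using xy by (auto simp: vec_eq_iff forall_3 e3_def)
qed

lemma eval_vec_e3_line:
  assumes "homogeneous3 F n" "eval_vec F e3 = 0"
  shows "eval_vec F (vector [0, 0, z]) = 0"
proof -
  have "vector [0, 0, z] = z *s e3" by (simp add: vec_eq_iff forall_3 e3_def)
  then show ?thesis using assms by (simp add: homogeneous3_eval_smult)
qed

lemma irreducible_if_unique_ordinary_singular_point_e3:
  assumes hom: "homogeneous3 F n" and F0: "F \<noteq> 0"
    and only: "\<forall>w. singular_point F w \<longrightarrow> proj_eq e3 w"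
    and ord: "ordinary_singular_point F e3 \<mu>" and \<mu>: "\<mu> = n - 1 \<or> \<mu> = n - 2"
    and e1: "eval2 (lead_coeff F) 1 0 \<noteq> 0"
  shows "irreducible F"
proof -
  have "2 \<le> \<mu>"
    using ord two_le_point_multiplicity[OF _ F0] by (auto simp: ordinary_singular_point_def)
  moreover have "\<mu> = n - degree F"
    using ord point_multiplicity_e3[OF hom F0] by (simp add: ordinary_singular_point_def)
  ultimately have deg: "1 \<le> degree F" "degree F \<le> 2" "n \<ge> 1"
    using \<mu> degree_le_if_homogeneous3[OF hom F0] by auto
  have "\<not> (\<not> G dvd 1 \<and> \<not> H dvd 1)" if FGH: "F = G * H" for G H
  proof
    assume units: "\<not> G dvd 1 \<and> \<not> H dvd 1"
    have "G \<noteq> 0" "H \<noteq> 0" using F0 FGH by auto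
    then have nonconst: "\<And>c. G \<noteq> [:[:[:c:]:]:]" "\<And>c. H \<noteq> [:[:[:c:]:]:]"
      using units nonconstant_if_not_unit by blast+
    have "\<not> meet_off_e3 G H" using not_meet_off_e3_if_only_singular_e3[OF FGH only] .
    moreover have "\<not> lead_coeffs_meet G H"
      using ordinary_e3_lead_coeff_factors_coprime[OF hom F0 ord e1, of "lead_coeff G" "lead_coeff H"]
      by (auto simp: lead_coeffs_meet_def FGH lead_coeff_mult)
    moreover have "eval_vec (G * H) (vector [0, 0, z]) = 0" for z
      using ord eval_vec_e3_line[OF hom] unfolding FGH[symmetric] ordinary_singular_point_def
        singular_point_def coeff_0_restr_line by blast
    moreover have "degree G + degree H = degree F"
      using \<open>G \<noteq> 0\<close> \<open>H \<noteq> 0\<close> by (simp add: FGH degree_mult_eq)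
    moreover have "degree G \<noteq> 0" "degree H \<noteq> 0"
      using calculation(1,2,4) deg meet_if_degree_0[of G H] meet_if_degree_0[of H G] nonconst
      by (auto simp: meet_off_e3_commute lead_coeffs_meet_commute)
    ultimately have "degree G = 1" "degree H = 1" using deg by linarith+
    then show False using meet_if_degree_1 \<open>\<not> meet_off_e3 G H\<close> \<open>\<not> lead_coeffs_meet G H\<close>
      \<open>\<And>z. eval_vec (G * H) (vector [0, 0, z]) = 0\<close> by blast
  qed
  then show ?thesis
    using F0 not_unit_if_homogeneous3[OF hom] deg by (auto simp: irreducible_def)
qed

lemma irreducible_if_unique_ordinary_singular_point:
  assumes hom: "homogeneous3 F n" and F0: "F \<noteq> 0"
    and only: "\<forall>q. singular_point F q \<longrightarrow> proj_eq p q"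
    and ord: "ordinary_singular_point F p \<mu>" and \<mu>: "\<mu> = n - 1 \<or> \<mu> = n - 2"
  shows "irreducible F"
proof -
  have "p \<noteq> 0" and Fp: "eval_vec F p = 0"
    using ord unfolding ordinary_singular_point_def singular_point_def coeff_0_restr_line by blast+
  obtain u where u: "coeff (restr_line F p u) \<mu> \<noteq> 0"
    using ex_direction_attaining_multiplicity[OF F0, of p] ord by (auto simp: ordinary_singular_point_def)
  then have "\<forall>k. u \<noteq> k *s p" using restr_line_along_point[OF hom Fp] by auto
  then obtain c where "invertible (columns3 u c p)"
    using ex_invertible_columns3[OF \<open>p \<noteq> 0\<close>] by blast
  moreover define A where "A = columns3 u c p"
  ultimately have A: "invertible A" by simp
  have Ae1: "A *v e1 = u" and Ae3: "A *v e3 = p"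
    by (simp_all add: A_def columns3_mult e1_def e3_def)
  define F' where "F' = compose_linear F A"
  have hom': "homogeneous3 F' n" and F'0: "F' \<noteq> 0"
    using homogeneous3_compose_linear[OF hom] compose_linear_eq_0_iff[OF A] F0 by (auto simp: F'_def)
  have ord': "ordinary_singular_point F' e3 \<mu>"
    using ord by (simp add: F'_def ordinary_singular_point_compose_linear[OF A] Ae3)
  have "proj_eq e3 w" if "singular_point F' w" for w
  proof -
    have "singular_point F (A *v w)"
      using that by (simp add: F'_def singular_point_compose_linear[OF A])
    then obtain k where "k \<noteq> 0" "A *v w = k *s p" using only by (auto simp: proj_eq_def)
    then have "k \<noteq> 0" "A *v w = A *v (k *s e3)" by (simp_all add: vector_scalar_commute Ae3)
    then show ?thesis
      using inj_matrix_vector_mult[OF A] by (auto simp: proj_eq_def dest: injD)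
  qed
  moreover have "eval2 (lead_coeff F') 1 0 \<noteq> 0"
  proof -
    have "\<mu> = n - degree F'"
      using ord' point_multiplicity_e3[OF hom' F'0] by (simp add: ordinary_singular_point_def)
    then have "coeff (restr_line F' e3 e1) (n - degree F') \<noteq> 0"
      using u by (simp add: F'_def restr_line_compose_linear Ae1 Ae3)
    then show ?thesis by (simp add: coeff_restr_line_e3_lead[OF hom' F'0] e1_def)
  qed
  ultimately have "irreducible F'"
    using irreducible_if_unique_ordinary_singular_point_e3[OF hom' F'0 _ ord' \<mu>] by blast
  then show ?thesis
    using irreducible_compose_linear_imp[OF A] by (simp add: F'_def)
qed

lemma eval_vec_z_0: "eval_vec F (vector [x, y, 0]) = eval2 (coeff F 0) x y"
  by (simp add: eval_vec_eq_poly_map_poly poly_0_coeff_0 coeff_map_poly)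

lemma has_linear_component_if_coeff_0_eq_0:
  assumes "coeff F 0 = 0"
  shows "has_linear_component F"
proof -
  obtain K where "F = pCons 0 K" using assms by (cases F) auto
  then have "[:0, 1:] dvd F" by (simp add: dvd_def)
  moreover have "homogeneous3 [:0, 1:] 1"
    by (auto simp: homogeneous3_def coeff_pCons split: nat.splits)
  ultimately show ?thesis unfolding has_linear_component_def by (intro exI[of _ "[:0, 1:]"]) simp
qed

lemma coeff_0_eq_0_if_singular_e1_e2:
  assumes hom: "homogeneous3 F n" and n: "n \<ge> 1"
    and e1: "n - 1 \<le> point_multiplicity F e1" and e2: "singular_point F e2"
  shows "coeff F 0 = 0"
proof -
  define C where "C = coeff F 0"
  have form: "j + k = n" if "coeff (coeff C j) k \<noteq> 0" for j k
    using homogeneous3_coeff[OF hom that[unfolded C_def]] by simp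
  have "e1 + t *s e2 = vector [1, t, 0]" for t by (simp add: vec_eq_iff forall_3 e1_def e2_def)
  then have "poly (restr_line F e1 e2) t = poly (map_poly (\<lambda>c. poly c 1) C) t" for t
    by (simp add: poly_restr_line eval_vec_z_0 C_def eval2_eq_poly_map_poly)
  then have "restr_line F e1 e2 = map_poly (\<lambda>c. poly c 1) C"
    by (intro poly_eq_poly_eq_iff[THEN iffD1] ext)
  then have low: "poly (coeff C j) 1 = 0" if "j < n - 1" for j
    using coeff_restr_line_below_multiplicity[of j F e1 e2] that e1 by (simp add: coeff_map_poly)
  have "e2 + t *s e1 = vector [t, 1, 0]" for t by (simp add: vec_eq_iff forall_3 e1_def e2_def)
  then have "poly (restr_line F e2 e1) t = poly (poly C [:1:]) t" for t
    by (simp add: poly_restr_line eval_vec_z_0 C_def eval2_def)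
  then have restr_e2: "restr_line F e2 e1 = poly C [:1:]"
    by (intro poly_eq_poly_eq_iff[THEN iffD1] ext)
  have high: "coeff (coeff C (n - k)) k = 0" if "k \<le> 1" for k
  proof -
    have "coeff (restr_line F e2 e1) k = 0"
      using e2 that by (auto simp: singular_point_def le_Suc_eq)
    then show ?thesis
      using coeff_poly_binary_form[of C n 1 k] form that n by (simp add: restr_e2)
  qed
  have "coeff (coeff C j) k = 0" for j k
  proof (rule ccontr)
    assume nz: "coeff (coeff C j) k \<noteq> 0"
    then have "j + k = n" by (rule form)
    show False
    proof (cases "j < n - 1")
      case True
      have "coeff C j = monom (coeff (coeff C j) k) k"
        using form \<open>j + k = n\<close> by (intro poly_eq_monom_if_single_coeff) force
      then have "poly (coeff C j) 1 = coeff (coeff C j) k" by (metis poly_monom power_one mult_1_right)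
      then show False using low[OF True] nz by simp
    next
      case False
      then have "k \<le> 1" "j = n - k" using \<open>j + k = n\<close> by auto
      then show False using high nz by auto
    qed
  qed
  then show ?thesis unfolding C_def by (intro poly_eqI) simp
qed

lemma has_linear_component_if_line_through_singular_points:
  assumes hom: "homogeneous3 F n" and n: "n \<ge> 1"
    and p: "singular_point F p" "n - 1 \<le> point_multiplicity F p"
    and q: "singular_point F q" and pq: "\<not> proj_eq p q"
  shows "has_linear_component F"
proof -
  have "p \<noteq> 0" "q \<noteq> 0" using p q by (auto simp: singular_point_def)
  have "\<forall>k. q \<noteq> k *s p"
  proof (intro allI notI)
    fix k assume "q = k *s p"
    moreover from this have "k \<noteq> 0" using \<open>q \<noteq> 0\<close> by auto
    ultimately show False using pq by (auto simp: proj_eq_def)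
  qed
  then obtain c where "invertible (columns3 p q c)"
    using ex_invertible_columns3[OF \<open>p \<noteq> 0\<close>] by blast
  moreover define A where "A = columns3 p q c"
  ultimately have A: "invertible A" by simp
  have Ae1: "A *v e1 = p" and Ae2: "A *v e2 = q"
    by (simp_all add: A_def columns3_mult e1_def e2_def)
  have "n - 1 \<le> point_multiplicity (compose_linear F A) e1"
    using p(2) by (simp add: point_multiplicity_compose_linear[OF A] Ae1)
  moreover have "singular_point (compose_linear F A) e2"
    using q by (simp add: singular_point_compose_linear[OF A] Ae2)
  ultimately have "coeff (compose_linear F A) 0 = 0"
    using coeff_0_eq_0_if_singular_e1_e2[OF homogeneous3_compose_linear[OF hom] n] by blast
  then show ?thesis
    by (rule has_linear_component_compose_linear_imp[OF A has_linear_component_if_coeff_0_eq_0])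
qed

theorem proposition3p8:
  fixes F :: "complex poly poly poly" and n :: nat
  assumes "F \<noteq> 0" and "homogeneous3 F n" and "n \<ge> 1"
  shows "(\<forall>p \<mu>. singular_point F p \<and> (\<forall>q. singular_point F q \<longrightarrow> proj_eq p q)
            \<and> ordinary_singular_point F p \<mu> \<and> (\<mu> = n - 1 \<or> \<mu> = n - 2)
            \<longrightarrow> irreducible F)
       \<and> (\<forall>p q. singular_point F p \<and> singular_point F q \<and> \<not> proj_eq p q
            \<and> (\<forall>r. singular_point F r \<longrightarrow> proj_eq p r \<or> proj_eq q r)
            \<and> ordinary_singular_point F p (n - 1) \<and> ordinary_singular_point F q 2
            \<longrightarrow> has_linear_component F)"
proof (intro conjI allI impI)
  fix p \<mu>
  assume "singular_point F p \<and> (\<forall>q. singular_point F q \<longrightarrow> proj_eq p q)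
    \<and> ordinary_singular_point F p \<mu> \<and> (\<mu> = n - 1 \<or> \<mu> = n - 2)"
  then show "irreducible F"
    using irreducible_if_unique_ordinary_singular_point[OF assms(2,1)] by blast
next
  fix p q
  assume "singular_point F p \<and> singular_point F q \<and> \<not> proj_eq p q
    \<and> (\<forall>r. singular_point F r \<longrightarrow> proj_eq p r \<or> proj_eq q r)
    \<and> ordinary_singular_point F p (n - 1) \<and> ordinary_singular_point F q 2"
  then show "has_linear_component F"
    using has_linear_component_if_line_through_singular_points[OF assms(2,3)]
    by (auto simp: ordinary_singular_point_def)
qed

end
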